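(* For every $n\ge1$ and every lattice congruence $R$ of the weak order on $S_n$, every vertex of the quotient graph $Q_R$ has degree at most $2n-\lceil 2\sqrt n\,\rceil$. Moreover, for every $n\ge1$ there is a lattice congruence $R$ of the weak order on $S_n$ such that $Q_R$ has a vertex of degree exactly $2n-\lceil2\sqrt n\,\rceil$.
   Context: $S_n$ is the set of permutations of $[n]$ with the weak order: $\pi\le\rho$ iff $\mathrm{inv}(\pi)\subseteq\mathrm{inv}(\rho)$, where $\mathrm{inv}(a_1\cdots a_n)=\{(a_i,a_j):i<j,\ a_i>a_j\}$. A lattice congruence is an equivalence relation compatible with joins and meets. The quotient graph $Q_R$ is the undirected cover graph of the lattice quotient $S_n/R$, whose elements are the classes, ordered by $X<Y$ iff $x<y$ for some $x\in X$, $y\in Y$. *)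

theory Defs
  imports Complex_Main
begin

text \<open>Permutations of [n] = {1..n}, in one-line notation a_1 ... a_n (as lists).\<close>
definition perms :: "nat \<Rightarrow> nat list set" where
  "perms n = {xs. distinct xs \<and> set xs = {1..n}}"

definition invs :: "nat list \<Rightarrow> (nat \<times> nat) set" where
  "invs xs = {(xs ! i, xs ! j) | i j. i < j \<and> j < length xs \<and> xs ! i > xs ! j}"

definition weak_le :: "nat list \<Rightarrow> nat list \<Rightarrow> bool" where
  "weak_le p q \<longleftrightarrow> invs p \<subseteq> invs q"

definition weak_less :: "nat list \<Rightarrow> nat list \<Rightarrow> bool" where
  "weak_less p q \<longleftrightarrow> weak_le p q \<and> p \<noteq> q"

definition is_join :: "nat \<Rightarrow> nat list \<Rightarrow> nat list \<Rightarrow> nat list \<Rightarrow> bool" where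
  "is_join n x y z \<longleftrightarrow> z \<in> perms n \<and> weak_le x z \<and> weak_le y z \<and>
     (\<forall>w\<in>perms n. weak_le x w \<and> weak_le y w \<longrightarrow> weak_le z w)"

definition is_meet :: "nat \<Rightarrow> nat list \<Rightarrow> nat list \<Rightarrow> nat list \<Rightarrow> bool" where
  "is_meet n x y z \<longleftrightarrow> z \<in> perms n \<and> weak_le z x \<and> weak_le z y \<and>
     (\<forall>w\<in>perms n. weak_le w x \<and> weak_le w y \<longrightarrow> weak_le w z)"

definition lattice_congruence :: "nat \<Rightarrow> (nat list \<times> nat list) set \<Rightarrow> bool" where
  "lattice_congruence n R \<longleftrightarrow> equiv (perms n) R \<and>
     (\<forall>x x' y y' z z'. (x, x') \<in> R \<and> (y, y') \<in> R \<and> is_join n x y z \<and> is_join n x' y' z'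
        \<longrightarrow> (z, z') \<in> R) \<and>
     (\<forall>x x' y y' z z'. (x, x') \<in> R \<and> (y, y') \<in> R \<and> is_meet n x y z \<and> is_meet n x' y' z'
        \<longrightarrow> (z, z') \<in> R)"

definition qless :: "nat list set \<Rightarrow> nat list set \<Rightarrow> bool" where
  "qless X Y \<longleftrightarrow> X \<noteq> Y \<and> (\<exists>x\<in>X. \<exists>y\<in>Y. weak_less x y)"

definition qcovers :: "nat \<Rightarrow> (nat list \<times> nat list) set \<Rightarrow> nat list set \<Rightarrow> nat list set \<Rightarrow> bool" where
  "qcovers n R X Y \<longleftrightarrow> X \<in> perms n // R \<and> Y \<in> perms n // R \<and> qless X Y \<and>
     \<not> (\<exists>Z\<in>perms n // R. qless X Z \<and> qless Z Y)"

definition qdegree :: "nat \<Rightarrow> (nat list \<times> nat list) set \<Rightarrow> nat list set \<Rightarrow> nat" where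
  "qdegree n R X = card {Y \<in> perms n // R. qcovers n R X Y \<or> qcovers n R Y X}"

end

theory Submission
  imports Defs
begin

text \<open>Inversion sets of permutations of \<open>[n]\<close> are exactly the transitive and cotransitive sets
  of inverted pairs; joins are transitive closures of unions, meets are dual. Hence every class
  of a lattice congruence is an interval \<open>[m, M]\<close> of the weak order, and every cover of it in the
  quotient comes from undoing a descent of \<open>m\<close> or from performing an ascent of \<open>M\<close>. So the degree
  is at most \<open>des m + asc M = 2 (n - 1) - asc m - des M\<close>, while \<open>n \<le> (asc m + 1) (des M + 1)\<close> by an
  Erd\H{o}s--Szekeres argument; AM-GM gives the bound. For sharpness write \<open>n \<le> r s\<close> with
  \<open>r + s = \<lceil>2 \<surd>n\<rceil>\<close> and identify permutations with the same inversions among values at distance at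
  most \<open>s\<close>: the class of the permutation reversing each block of \<open>s\<close> consecutive values has at least
  \<open>n - r\<close> lower and \<open>n - s\<close> upper covers.\<close>

section \<open>Relative order in lists\<close>

definition precedes :: "'a list \<Rightarrow> 'a \<Rightarrow> 'a \<Rightarrow> bool" where
  "precedes xs a b \<longleftrightarrow> (\<exists>i j. i < j \<and> j < length xs \<and> xs ! i = a \<and> xs ! j = b)"

lemma precedes_Nil [simp]: "\<not> precedes [] a b"
  unfolding precedes_def by simp

lemma precedes_Cons: "precedes (x # xs) a b \<longleftrightarrow> (a = x \<and> b \<in> set xs) \<or> precedes xs a b"
proof
  assume "precedes (x # xs) a b"
  then obtain i j where "i < j" "j < Suc (length xs)" "(x # xs) ! i = a" "(x # xs) ! j = b"
    unfolding precedes_def by auto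
  then show "(a = x \<and> b \<in> set xs) \<or> precedes xs a b"
    unfolding precedes_def by (cases i; cases j) auto
next
  assume "(a = x \<and> b \<in> set xs) \<or> precedes xs a b"
  then show "precedes (x # xs) a b"
    unfolding precedes_def in_set_conv_nth
    by (metis Suc_less_eq length_Cons nth_Cons_0 nth_Cons_Suc zero_less_Suc)
qed

lemma precedes_set: "precedes xs a b \<Longrightarrow> a \<in> set xs \<and> b \<in> set xs"
  unfolding precedes_def by auto

lemma precedes_nth: "i < j \<Longrightarrow> j < length xs \<Longrightarrow> precedes xs (xs ! i) (xs ! j)"
  unfolding precedes_def by blast

lemma precedes_irrefl: "distinct xs \<Longrightarrow> \<not> precedes xs a a"
  by (induction xs) (auto simp: precedes_Cons)

lemma precedes_trans: "distinct xs \<Longrightarrow> precedes xs a b \<Longrightarrow> precedes xs b c \<Longrightarrow> precedes xs a c"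
  by (induction xs) (auto simp: precedes_Cons dest: precedes_set)

lemma precedes_asym: "distinct xs \<Longrightarrow> precedes xs a b \<Longrightarrow> \<not> precedes xs b a"
  using precedes_irrefl precedes_trans by metis

lemma precedes_total: "a \<in> set xs \<Longrightarrow> b \<in> set xs \<Longrightarrow> a \<noteq> b \<Longrightarrow> precedes xs a b \<or> precedes xs b a"
  by (induction xs) (auto simp: precedes_Cons)

lemma precedes_eq_imp_eq:
  assumes "distinct xs" "distinct ys" "set xs = set ys" "\<And>a b. precedes xs a b \<longleftrightarrow> precedes ys a b"
  shows "xs = ys"
  using assms
proof (induction xs arbitrary: ys)
  case (Cons x xs)
  then obtain y ys' where ys: "ys = y # ys'" by (cases ys) auto
  have "x = y"
  proof (rule ccontr)
    assume "x \<noteq> y"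
    then have "y \<in> set xs" "x \<in> set ys'" using Cons.prems(3) ys by auto
    then have "precedes (x # xs) x y" "precedes ys y x" using ys by (auto simp: precedes_Cons)
    then show False using Cons.prems precedes_asym by metis
  qed
  have "precedes xs a b \<longleftrightarrow> precedes ys' a b" for a b
    using Cons.prems(1,2) Cons.prems(4)[of a b] ys \<open>x = y\<close>
      by (auto simp: precedes_Cons dest: precedes_set)
  moreover have "set xs = set ys'" using Cons.prems(1-3) ys \<open>x = y\<close> by auto
  ultimately have "xs = ys'" using Cons.IH Cons.prems(1,2) ys by auto
  then show ?case using ys \<open>x = y\<close> by simp
qed simp

lemma exists_list_precedes:
  assumes fin: "finite S"
    and irr: "\<And>a. a \<in> S \<Longrightarrow> \<not> lt a a"
    and tr: "\<And>a b c. a \<in> S \<Longrightarrow> b \<in> S \<Longrightarrow> c \<in> S \<Longrightarrow> lt a b \<Longrightarrow> lt b c \<Longrightarrow> lt a c"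
    and tot: "\<And>a b. a \<in> S \<Longrightarrow> b \<in> S \<Longrightarrow> a \<noteq> b \<Longrightarrow> lt a b \<or> lt b a"
  shows "\<exists>xs. distinct xs \<and> set xs = S \<and> (\<forall>a b. precedes xs a b \<longleftrightarrow> a \<in> S \<and> b \<in> S \<and> lt a b)"
proof -
  define rank where "rank a = card {b\<in>S. lt b a}" for a
  have rank_less: "rank a < rank b" if "a \<in> S" "b \<in> S" "lt a b" for a b
  proof -
    have "{c\<in>S. lt c a} \<subset> {c\<in>S. lt c b}" using tr irr that by blast
    then show ?thesis unfolding rank_def using fin by (intro psubset_card_mono) auto
  qed
  obtain ys where "set ys = S" "distinct ys" using finite_distinct_list[OF fin] by blast
  define xs where "xs = sort_key rank ys"
  have xs: "distinct xs" "set xs = S" "sorted (map rank xs)"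
    using \<open>set ys = S\<close> \<open>distinct ys\<close> by (auto simp: xs_def)
  have rank_le: "rank a \<le> rank b" if "precedes xs a b" for a b
    using that xs(3) sorted_nth_mono[of "map rank xs"] unfolding precedes_def by fastforce
  have "precedes xs a b \<longleftrightarrow> a \<in> S \<and> b \<in> S \<and> lt a b" for a b
  proof
    assume ab: "precedes xs a b"
    then have "a \<in> S" "b \<in> S" "a \<noteq> b" using precedes_set precedes_irrefl xs by metis+
    then show "a \<in> S \<and> b \<in> S \<and> lt a b" using tot rank_le[OF ab] rank_less[of b a] by force
  next
    assume ab: "a \<in> S \<and> b \<in> S \<and> lt a b"
    then have "a \<noteq> b" using irr by auto
    then show "precedes xs a b"
      using precedes_total[of a xs b] rank_le[of b a] rank_less[of a b] ab xs(2) by force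
  qed
  then show ?thesis using xs by blast
qed

section \<open>Inversion sets\<close>

lemma permsD: "p \<in> perms n \<Longrightarrow> distinct p \<and> set p = {1..n} \<and> length p = n"
  unfolding perms_def using distinct_card by fastforce

lemma finite_perms: "finite (perms n)"
proof -
  have "perms n \<subseteq> {xs. set xs \<subseteq> {1..n} \<and> length xs = n}" using permsD by auto
  then show ?thesis using finite_lists_length_eq[of "{1..n}" n] finite_subset by blast
qed

lemma invs_eq_precedes: "invs xs = {(a, b). precedes xs a b \<and> b < a}"
  unfolding invs_def precedes_def by auto

definition full_invs :: "nat \<Rightarrow> (nat \<times> nat) set" where
  "full_invs n = {(a, c). 1 \<le> c \<and> c < a \<and> a \<le> n}"

definition cotrans :: "('a::linorder \<times> 'a) set \<Rightarrow> bool" where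
  "cotrans T \<longleftrightarrow> (\<forall>a b c. (a, c) \<in> T \<longrightarrow> c < b \<longrightarrow> b < a \<longrightarrow> (a, b) \<in> T \<or> (b, c) \<in> T)"

definition inversion_set :: "nat \<Rightarrow> (nat \<times> nat) set \<Rightarrow> bool" where
  "inversion_set n T \<longleftrightarrow> T \<subseteq> full_invs n \<and> trans T \<and> cotrans T"

lemma precedes_perm_iff:
  assumes "p \<in> perms n" "a \<in> {1..n}" "b \<in> {1..n}"
  shows "precedes p a b \<longleftrightarrow> (b < a \<and> (a, b) \<in> invs p) \<or> (a < b \<and> (b, a) \<notin> invs p)"
proof -
  have p: "distinct p" "a \<in> set p" "b \<in> set p" using permsD[OF assms(1)] assms by auto
  show ?thesis
  proof (cases a b rule: linorder_cases)
    case less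
    then have "precedes p a b \<longleftrightarrow> \<not> precedes p b a"
      using precedes_total[OF p(2,3)] precedes_asym[OF p(1)] by (metis less_irrefl)
    then show ?thesis using less by (simp add: invs_eq_precedes)
  next
    case equal
    then show ?thesis using precedes_irrefl[OF p(1)] by simp
  next
    case greater
    then show ?thesis by (simp add: invs_eq_precedes)
  qed
qed

lemma inversion_set_invs:
  assumes p: "p \<in> perms n"
  shows "inversion_set n (invs p)"
  unfolding inversion_set_def cotrans_def trans_def
proof (intro conjI allI impI)
  have p': "distinct p" "set p = {1..n}" using permsD[OF p] by auto
  show "invs p \<subseteq> full_invs n"
    using p' by (auto simp: invs_eq_precedes full_invs_def dest!: precedes_set)
  fix a b c
  show "(a, c) \<in> invs p" if "(a, b) \<in> invs p" "(b, c) \<in> invs p"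
    using that p' by (auto simp: invs_eq_precedes intro: precedes_trans)
  show "(a, b) \<in> invs p \<or> (b, c) \<in> invs p" if ac: "(a, c) \<in> invs p" "c < b" "b < a"
  proof -
    have "precedes p a c" "a \<in> set p" "c \<in> set p"
      using ac by (auto simp: invs_eq_precedes dest: precedes_set)
    then have "b \<in> set p" "precedes p a b \<or> precedes p b c"
      using ac p' precedes_total[of a p b] precedes_trans[of p b a c] by auto
    then show ?thesis using ac by (auto simp: invs_eq_precedes)
  qed
qed

lemma inj_on_invs: "inj_on invs (perms n)"
proof (rule inj_onI)
  fix p q assume pq: "p \<in> perms n" "q \<in> perms n" "invs p = invs q"
  have "precedes p a b \<longleftrightarrow> precedes q a b" for a b
    using precedes_perm_iff[OF pq(1), of a b] precedes_perm_iff[OF pq(2), of a b] pq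
      precedes_set[of p a b] precedes_set[of q a b] permsD[OF pq(1)] permsD[OF pq(2)] by blast
  then show "p = q" using pq permsD precedes_eq_imp_eq by metis
qed

lemma weak_le_antisym: "p \<in> perms n \<Longrightarrow> q \<in> perms n \<Longrightarrow> weak_le p q \<Longrightarrow> weak_le q p \<Longrightarrow> p = q"
  unfolding weak_le_def using inj_on_invs[of n] by (auto dest: inj_onD)

lemma inversion_set_imp_invs:
  assumes T: "inversion_set n T"
  shows "\<exists>w\<in>perms n. invs w = T"
proof -
  have TD: "T \<subseteq> full_invs n"
    and tT: "\<And>a b c. (a, b) \<in> T \<Longrightarrow> (b, c) \<in> T \<Longrightarrow> (a, c) \<in> T"
    and cT: "\<And>a b c. (a, c) \<in> T \<Longrightarrow> c < b \<Longrightarrow> b < a \<Longrightarrow> (a, b) \<in> T \<or> (b, c) \<in> T"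
    using T unfolding inversion_set_def cotrans_def trans_def by blast+
  define lt where "lt a b \<longleftrightarrow> (a, b) \<in> T \<or> (a < b \<and> (b, a) \<notin> T)" for a b
  have desc: "b < a" if "(a, b) \<in> T" for a b using that TD unfolding full_invs_def by auto
  have "lt a c" if "lt a b" "lt b c" for a b c
  proof (cases a c rule: linorder_cases)
    case less
    then show ?thesis
      using that tT[of c a b] tT[of b c a] cT[where a=c and b=b and c=a] unfolding lt_def
      by (force dest: desc)
  next
    case equal
    then show ?thesis using that unfolding lt_def by (force dest: desc)
  next
    case greater
    then show ?thesis
      using that tT[of a b c] cT[where a=a and b=c and c=b] cT[where a=b and b=a and c=c]
      unfolding lt_def
      by (force dest: desc)
  qed
  moreover have "\<not> lt a a" for a using desc unfolding lt_def by blast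
  moreover have "lt a b \<or> lt b a" if "a \<noteq> b" for a b
    using that desc unfolding lt_def by (metis linorder_neqE_nat)
  ultimately obtain w where w: "distinct w" "set w = {1..n}"
    "\<And>a b. precedes w a b \<longleftrightarrow> a \<in> {1..n} \<and> b \<in> {1..n} \<and> lt a b"
    using exists_list_precedes[of "{1..n}" lt] by blast
  have "invs w = T" using w(3) TD desc unfolding invs_eq_precedes lt_def full_invs_def by fastforce
  then show ?thesis using w unfolding perms_def by blast
qed

definition perm_of :: "nat \<Rightarrow> (nat \<times> nat) set \<Rightarrow> nat list" where
  "perm_of n T = (SOME w. w \<in> perms n \<and> invs w = T)"

lemma perm_of: "inversion_set n T \<Longrightarrow> perm_of n T \<in> perms n \<and> invs (perm_of n T) = T"
  unfolding perm_of_def using inversion_set_imp_invs someI_ex by (metis (mono_tags, lifting))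

section \<open>Joins and meets\<close>

lemma trancl_least: "r \<subseteq> s \<Longrightarrow> trans s \<Longrightarrow> r\<^sup>+ \<subseteq> s"
  by (metis trancl_id trancl_mono_subset)

lemma trancl_decreasing:
  fixes U :: "('a::order \<times> 'a) set"
  assumes "U \<subseteq> {(a, c). c < a}" "(a, c) \<in> U\<^sup>+"
  shows "c < a"
  using assms(2) by induction (use assms(1) in \<open>auto dest: order.strict_trans\<close>)

lemma cotrans_trancl:
  fixes U :: "('a::linorder \<times> 'a) set"
  assumes dec: "U \<subseteq> {(a, c). c < a}" and U: "cotrans U"
  shows "cotrans (U\<^sup>+)"
  unfolding cotrans_def
proof (intro allI impI)
  fix a b c
  assume "(a, c) \<in> U\<^sup>+" "c < b" "b < a"
  then show "(a, b) \<in> U\<^sup>+ \<or> (b, c) \<in> U\<^sup>+"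
  proof (induction arbitrary: b rule: trancl_induct)
    case (base c)
    then show ?case using U unfolding cotrans_def by blast
  next
    case (step d c)
    have "c < d" "d < a" using step.hyps dec trancl_decreasing[OF dec] by auto
    consider "b = d" | "d < b" | "b < d" by fastforce
    then show ?case
    proof cases
      case 1
      then show ?thesis using step.hyps by auto
    next
      case 2
      then have "(a, b) \<in> U\<^sup>+ \<or> (b, d) \<in> U\<^sup>+" using step.IH step.prems by blast
      then show ?thesis using step.hyps(2) by (meson trancl.trancl_into_trancl)
    next
      case 3
      then have "(d, b) \<in> U \<or> (b, c) \<in> U" using U step unfolding cotrans_def by blast
      then show ?thesis using step.hyps(1) by (meson r_into_trancl' trancl_into_trancl)
    qed
  qed
qed

lemma inversion_set_Un_trancl:
  assumes "inversion_set n A" "inversion_set n B"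
  shows "inversion_set n ((A \<union> B)\<^sup>+)"
proof -
  have sub: "A \<union> B \<subseteq> full_invs n" using assms unfolding inversion_set_def by auto
  have "trans (full_invs n)" unfolding trans_def full_invs_def by auto
  then have "(A \<union> B)\<^sup>+ \<subseteq> full_invs n" using sub by (rule trancl_least[rotated])
  moreover have "cotrans (A \<union> B)" using assms unfolding inversion_set_def cotrans_def by blast
  moreover have "A \<union> B \<subseteq> {(a, c). c < a}" using sub unfolding full_invs_def by auto
  ultimately show ?thesis unfolding inversion_set_def by (simp add: cotrans_trancl)
qed

lemma inversion_set_compl:
  assumes "inversion_set n T"
  shows "inversion_set n (full_invs n - T)"
proof -
  have tT: "(a, b) \<in> T \<Longrightarrow> (b, c) \<in> T \<Longrightarrow> (a, c) \<in> T"
    and cT: "(a, c) \<in> T \<Longrightarrow> c < b \<Longrightarrow> b < a \<Longrightarrow> (a, b) \<in> T \<or> (b, c) \<in> T" for a b c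
    using assms unfolding inversion_set_def trans_def cotrans_def by blast+
  have "trans (full_invs n - T)"
  proof (rule transI)
    fix a b c assume "(a, b) \<in> full_invs n - T" "(b, c) \<in> full_invs n - T"
    then show "(a, c) \<in> full_invs n - T"
      using cT[where a=a and b=b and c=c] unfolding full_invs_def by auto
  qed
  moreover have "cotrans (full_invs n - T)"
    unfolding cotrans_def
  proof (intro allI impI)
    fix a b c assume "(a, c) \<in> full_invs n - T" "c < b" "b < a"
    then show "(a, b) \<in> full_invs n - T \<or> (b, c) \<in> full_invs n - T"
      using tT[of a b c] unfolding full_invs_def by auto
  qed
  ultimately show ?thesis unfolding inversion_set_def by blast
qed

lemma invs_subset_full: "p \<in> perms n \<Longrightarrow> invs p \<subseteq> full_invs n"
  using inversion_set_invs unfolding inversion_set_def by blast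

lemma is_join_iff_invs:
  assumes x: "x \<in> perms n" and y: "y \<in> perms n"
  shows "is_join n x y z \<longleftrightarrow> z \<in> perms n \<and> invs z = (invs x \<union> invs y)\<^sup>+"
proof -
  let ?U = "(invs x \<union> invs y)\<^sup>+"
  have least: "?U \<subseteq> invs w" if "w \<in> perms n" "weak_le x w" "weak_le y w" for w
    using that inversion_set_invs[OF that(1)] unfolding weak_le_def inversion_set_def
    by (intro trancl_least) auto
  have upper: "invs x \<subseteq> ?U" "invs y \<subseteq> ?U" by (auto intro: r_into_trancl)
  have join_U: "is_join n x y w" if "w \<in> perms n" "invs w = ?U" for w
    using that least upper unfolding is_join_def weak_le_def by blast
  obtain w where "w \<in> perms n" "invs w = ?U"
    using perm_of[OF inversion_set_Un_trancl[OF inversion_set_invs[OF x] inversion_set_invs[OF y]]]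
      by blast
  then have w: "is_join n x y w" using join_U by blast
  have "invs z = ?U" if z: "is_join n x y z"
  proof (rule subset_antisym)
    have "weak_le z w" using z w unfolding is_join_def by blast
    then show "invs z \<subseteq> ?U" using \<open>invs w = ?U\<close> unfolding weak_le_def by simp
    show "?U \<subseteq> invs z" using least z unfolding is_join_def weak_le_def by blast
  qed
  moreover have "is_join n x y z \<Longrightarrow> z \<in> perms n" unfolding is_join_def by blast
  ultimately show ?thesis using join_U by blast
qed

lemma is_meet_iff_invs:
  assumes x: "x \<in> perms n" and y: "y \<in> perms n"
  shows "is_meet n x y z \<longleftrightarrow>
    z \<in> perms n \<and> invs z = full_invs n - ((full_invs n - invs x) \<union> (full_invs n - invs y))\<^sup>+"
proof -
  let ?V = "((full_invs n - invs x) \<union> (full_invs n - invs y))\<^sup>+"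
  have greatest: "invs w \<subseteq> full_invs n - ?V" if "w \<in> perms n" "weak_le w x" "weak_le w y" for w
  proof -
    have "trans (full_invs n - invs w)"
      using inversion_set_compl[OF inversion_set_invs[OF that(1)]]
        unfolding inversion_set_def by blast
    moreover have "(full_invs n - invs x) \<union> (full_invs n - invs y) \<subseteq> full_invs n - invs w"
      using that unfolding weak_le_def by auto
    ultimately have "?V \<subseteq> full_invs n - invs w" by (rule trancl_least[rotated])
    then show ?thesis using invs_subset_full[OF that(1)] by auto
  qed
  have lower: "full_invs n - ?V \<subseteq> invs x" "full_invs n - ?V \<subseteq> invs y" by auto
  have meet_V: "is_meet n x y w" if "w \<in> perms n" "invs w = full_invs n - ?V" for w
    using that greatest lower unfolding is_meet_def weak_le_def by blast
  obtain w where "w \<in> perms n" "invs w = full_invs n - ?V"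
    using perm_of[OF inversion_set_compl[OF inversion_set_Un_trancl[OF
        inversion_set_compl[OF inversion_set_invs[OF x]]
        inversion_set_compl[OF inversion_set_invs[OF y]]]]]
    by blast
  then have w: "is_meet n x y w" using meet_V by blast
  have "invs z = full_invs n - ?V" if z: "is_meet n x y z"
  proof (rule subset_antisym)
    have "weak_le w z" using z w unfolding is_meet_def by blast
    then show "full_invs n - ?V \<subseteq> invs z"
      using \<open>invs w = full_invs n - ?V\<close> unfolding weak_le_def by simp
    show "invs z \<subseteq> full_invs n - ?V" using greatest z unfolding is_meet_def weak_le_def by blast
  qed
  moreover have "is_meet n x y z \<Longrightarrow> z \<in> perms n" unfolding is_meet_def by blast
  ultimately show ?thesis using meet_V by blast
qed

lemma join_exists:
  assumes x: "x \<in> perms n" and y: "y \<in> perms n"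
  shows "\<exists>z. is_join n x y z"
  using perm_of[OF inversion_set_Un_trancl[OF inversion_set_invs[OF x] inversion_set_invs[OF y]]]
  by (auto simp: is_join_iff_invs[OF x y])

lemma meet_exists:
  assumes x: "x \<in> perms n" and y: "y \<in> perms n"
  shows "\<exists>z. is_meet n x y z"
  using perm_of[OF inversion_set_compl[OF inversion_set_Un_trancl[OF
      inversion_set_compl[OF inversion_set_invs[OF x]]
      inversion_set_compl[OF inversion_set_invs[OF y]]]]]
  by (auto simp: is_meet_iff_invs[OF x y])

section \<open>Descents, ascents and covers in the weak order\<close>

lemma precedes_rev: "precedes (rev xs) a b \<longleftrightarrow> precedes xs b a"
proof -
  have "precedes ys b a" if ab: "precedes (rev ys) a b" for ys :: "'a list" and a b
  proof -
    obtain i j where "i < j" "j < length ys" "rev ys ! i = a" "rev ys ! j = b"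
      using ab unfolding precedes_def by auto
    then show ?thesis
      using precedes_nth[of "length ys - Suc j" "length ys - Suc i" ys] by (simp add: rev_nth)
  qed
  from this[of xs] this[of "rev xs"] show ?thesis by auto
qed

lemma rev_in_perms: "p \<in> perms n \<Longrightarrow> rev p \<in> perms n"
  unfolding perms_def by simp

lemma invs_rev:
  assumes p: "p \<in> perms n"
  shows "invs (rev p) = full_invs n - invs p"
proof (rule set_eqI, clarify)
  fix a b
  have p': "distinct p" "set p = {1..n}" using permsD[OF p] by auto
  show "(a, b) \<in> invs (rev p) \<longleftrightarrow> (a, b) \<in> full_invs n - invs p"
  proof (cases "b < a \<and> a \<in> {1..n} \<and> b \<in> {1..n}")
    case True
    then have "precedes p b a \<longleftrightarrow> \<not> precedes p a b"
      using p' precedes_total[of a p b] precedes_asym[of p b a] by auto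
    then show ?thesis using True unfolding invs_eq_precedes precedes_rev full_invs_def by auto
  next
    case False
    then show ?thesis using p' precedes_set[of p b a]
      unfolding invs_eq_precedes precedes_rev full_invs_def by auto
  qed
qed

definition descents :: "nat list \<Rightarrow> nat set" where
  "descents m = {i. Suc i < length m \<and> m ! Suc i < m ! i}"

definition ascents :: "nat list \<Rightarrow> nat set" where
  "ascents m = {i. Suc i < length m \<and> m ! i < m ! Suc i}"

lemma finite_descents: "finite (descents m)"
  unfolding descents_def by (rule finite_subset[of _ "{..<length m}"]) auto

lemma finite_ascents: "finite (ascents m)"
  unfolding ascents_def by (rule finite_subset[of _ "{..<length m}"]) auto

lemma descents_rev:
  assumes "j \<in> descents (rev m)"
  obtains i where "i \<in> ascents m" "rev m ! j = m ! Suc i" "rev m ! Suc j = m ! i"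
proof
  let ?i = "length m - Suc (Suc j)"
  have j: "Suc j < length m" using assms unfolding descents_def by simp
  then show "rev m ! j = m ! Suc ?i" "rev m ! Suc j = m ! ?i"
    by (simp_all add: rev_nth Suc_diff_Suc)
  then show "?i \<in> ascents m" using assms j unfolding descents_def ascents_def by auto
qed

lemma nth_in_invs: "i < j \<Longrightarrow> j < length m \<Longrightarrow> (m ! i, m ! j) \<in> invs m \<longleftrightarrow> m ! j < m ! i"
  using precedes_nth by (auto simp: invs_eq_precedes)

lemma nth_notin_invs: "distinct m \<Longrightarrow> i < j \<Longrightarrow> j < length m \<Longrightarrow> (m ! j, m ! i) \<notin> invs m"
  using precedes_nth[of i j m] precedes_asym[of m "m ! i" "m ! j"] by (auto simp: invs_eq_precedes)

lemma precedes_after_adjacent: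
  assumes "distinct xs" "Suc i < length xs" "precedes xs (xs ! i) z" "z \<noteq> xs ! Suc i"
  shows "precedes xs (xs ! Suc i) z"
proof -
  obtain i' j where h: "i' < j" "j < length xs" "xs ! i' = xs ! i" "xs ! j = z"
    using assms(3) unfolding precedes_def by blast
  have "i' = i" using h assms(1,2) nth_eq_iff_index_eq by fastforce
  then have "Suc i < j" using h assms(4) by (metis Suc_lessI)
  then show ?thesis using h precedes_nth by metis
qed

lemma precedes_before_adjacent:
  assumes "distinct xs" "Suc i < length xs" "precedes xs z (xs ! Suc i)" "z \<noteq> xs ! i"
  shows "precedes xs z (xs ! i)"
proof -
  obtain i' j where h: "i' < j" "j < length xs" "xs ! i' = z" "xs ! j = xs ! Suc i"
    using assms(3) unfolding precedes_def by blast
  have "j = Suc i" using h assms(1,2) nth_eq_iff_index_eq by fastforce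
  then have "i' < i" using h assms(4) by (metis less_Suc_eq)
  then show ?thesis using h precedes_nth assms(2) by (metis Suc_lessD)
qed

lemma inversion_set_remove_descent:
  assumes m: "m \<in> perms n" and i: "i \<in> descents m"
  shows "inversion_set n (invs m - {(m ! i, m ! Suc i)})"
proof -
  let ?x = "m ! i" and ?y = "m ! Suc i"
  have d: "distinct m" and si: "Suc i < length m"
    using permsD[OF m] i unfolding descents_def by auto
  have tm: "trans (invs m)" and cm: "cotrans (invs m)" and sub: "invs m \<subseteq> full_invs n"
    using inversion_set_invs[OF m] unfolding inversion_set_def by auto
  have after: "precedes m ?y z" if "precedes m ?x z" "z \<noteq> ?y" for z
    using precedes_after_adjacent[OF d si] that .
  have before: "precedes m z ?x" if "precedes m z ?y" "z \<noteq> ?x" for z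
    using precedes_before_adjacent[OF d si] that .
  have "trans (invs m - {(?x, ?y)})"
  proof (rule transI)
    fix a b c assume ab: "(a, b) \<in> invs m - {(?x, ?y)}" and bc: "(b, c) \<in> invs m - {(?x, ?y)}"
    have "(a, c) \<noteq> (?x, ?y)"
    proof
      assume "(a, c) = (?x, ?y)"
      then have "precedes m ?y b" "precedes m b ?y"
        using ab bc after by (auto simp: invs_eq_precedes)
      then show False using precedes_asym[OF d] by blast
    qed
    then show "(a, c) \<in> invs m - {(?x, ?y)}" using ab bc tm by (auto dest: transD)
  qed
  moreover have "cotrans (invs m - {(?x, ?y)})"
    unfolding cotrans_def
  proof (intro allI impI)
    fix a b c assume ac: "(a, c) \<in> invs m - {(?x, ?y)}" and "c < b" "b < a"
    then have "(a, b) \<in> invs m \<or> (b, c) \<in> invs m" using cm unfolding cotrans_def by blast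
    moreover have "(b, c) \<in> invs m" if "(a, b) = (?x, ?y)"
      using that ac \<open>c < b\<close> after[of c] by (auto simp: invs_eq_precedes)
    moreover have "(a, b) \<in> invs m" if "(b, c) = (?x, ?y)"
      using that ac \<open>b < a\<close> before[of a] by (auto simp: invs_eq_precedes)
    ultimately show "(a, b) \<in> invs m - {(?x, ?y)} \<or> (b, c) \<in> invs m - {(?x, ?y)}"
      using \<open>c < b\<close> \<open>b < a\<close> by auto
  qed
  ultimately show ?thesis using sub unfolding inversion_set_def by auto
qed

text \<open>Reversal complements inversion sets and turns ascents into descents.\<close>
lemma inversion_set_add_ascent:
  assumes M: "M \<in> perms n" and i: "i \<in> ascents M"
  shows "inversion_set n (invs M \<union> {(M ! Suc i, M ! i)})"
proof -
  let ?j = "length M - Suc (Suc i)"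
  have si: "Suc i < length M" "M ! i < M ! Suc i" using i unfolding ascents_def by auto
  then have ij: "rev M ! ?j = M ! Suc i" "rev M ! Suc ?j = M ! i"
    by (simp_all add: rev_nth Suc_diff_Suc)
  then have j: "?j \<in> descents (rev M)" using si unfolding descents_def by auto
  have "(M ! Suc i, M ! i) \<in> full_invs n"
    using si permsD[OF M] nth_mem[of i M] nth_mem[of "Suc i" M] unfolding full_invs_def by auto
  then have "invs M \<union> {(M ! Suc i, M ! i)}
      = full_invs n - (invs (rev M) - {(rev M ! ?j, rev M ! Suc ?j)})"
    using invs_rev[OF M] invs_subset_full[OF M] ij by auto
  then show ?thesis
    using inversion_set_compl[OF inversion_set_remove_descent[OF rev_in_perms[OF M] j]] by simp
qed

text \<open>Induction on the distance of positions: an inversion of \<open>m\<close> at distance \<open>d + 1\<close> is forced by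
  shorter ones through transitivity, or through cotransitivity by the non-inversions of \<open>m\<close>.\<close>
lemma invs_eq_if_descents_in:
  assumes m: "m \<in> perms n" and T: "inversion_set n T" and sub: "T \<subseteq> invs m"
    and des: "\<And>i. i \<in> descents m \<Longrightarrow> (m ! i, m ! Suc i) \<in> T"
  shows "T = invs m"
proof -
  have d: "distinct m" using permsD[OF m] by auto
  have tT: "trans T" and cT: "cotrans T" using T unfolding inversion_set_def by auto
  have dist: "\<forall>i. i + Suc d < length m \<longrightarrow> m ! (i + Suc d) < m ! i \<longrightarrow>
      (m ! i, m ! (i + Suc d)) \<in> T" for d
  proof (induction d)
    case 0
    then show ?case using des unfolding descents_def by auto
  next
    case (Suc d)
    show ?case
    proof (intro allI impI)
      fix i assume j: "i + Suc (Suc d) < length m" and ij: "m ! (i + Suc (Suc d)) < m ! i"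
      let ?k = "Suc i" and ?j = "i + Suc (Suc d)"
      have IH: "m ! ?j < m ! ?k \<Longrightarrow> (m ! ?k, m ! ?j) \<in> T"
        using Suc.IH j by (metis add_Suc add_Suc_right)
      have "m ! ?k \<noteq> m ! i" "m ! ?k \<noteq> m ! ?j" using d j nth_eq_iff_index_eq by fastforce+
      then consider "m ! ?j < m ! ?k" "m ! ?k < m ! i" | "m ! ?k < m ! ?j" "m ! ?k < m ! i"
        | "m ! i < m ! ?k"
        by fastforce
      then show "(m ! i, m ! ?j) \<in> T"
      proof cases
        case 1
        then have "(m ! i, m ! ?k) \<in> T" using des j unfolding descents_def by auto
        then show ?thesis using IH 1 tT by (auto dest: transD)
      next
        case 2
        then have "(m ! i, m ! ?k) \<in> T" using des j unfolding descents_def by auto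
        moreover have "(m ! ?j, m ! ?k) \<notin> T" using sub nth_notin_invs[OF d, of ?k ?j] j by auto
        ultimately show ?thesis using cT 2 ij unfolding cotrans_def by blast
      next
        case 3
        then have "(m ! ?k, m ! ?j) \<in> T" using IH ij by auto
        moreover have "(m ! ?k, m ! i) \<notin> T" using sub nth_notin_invs[OF d, of i ?k] j by auto
        ultimately show ?thesis using cT 3 ij unfolding cotrans_def by blast
      qed
    qed
  qed
  have "invs m \<subseteq> T"
  proof
    fix p assume "p \<in> invs m"
    then obtain i j where ij: "i < j" "j < length m" "p = (m ! i, m ! j)" "m ! j < m ! i"
      unfolding invs_def by blast
    obtain d where "j = i + Suc d" using less_imp_Suc_add[OF ij(1)] by auto
    then show "p \<in> T" using dist[of d, rule_format, of i] ij by simp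
  qed
  then show ?thesis using sub by blast
qed

lemma weak_less_imp_descent:
  assumes u: "u \<in> perms n" and m: "m \<in> perms n" and um: "weak_less u m"
  shows "\<exists>i\<in>descents m. (m ! i, m ! Suc i) \<notin> invs u"
proof (rule ccontr)
  assume "\<not> ?thesis"
  then have "invs u = invs m"
    using invs_eq_if_descents_in[OF m inversion_set_invs[OF u]] um
      unfolding weak_less_def weak_le_def by blast
  then show False using um inj_on_invs[of n] u m unfolding weak_less_def by (auto dest: inj_onD)
qed

lemma weak_less_imp_ascent:
  assumes u: "u \<in> perms n" and M: "M \<in> perms n" and Mu: "weak_less M u"
  shows "\<exists>i\<in>ascents M. (M ! Suc i, M ! i) \<in> invs u"
proof -
  have "weak_less (rev u) (rev M)"
    using Mu invs_rev[OF u] invs_rev[OF M] unfolding weak_less_def weak_le_def by auto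
  then obtain j where j: "j \<in> descents (rev M)" "(rev M ! j, rev M ! Suc j) \<notin> invs (rev u)"
    using weak_less_imp_descent[OF rev_in_perms[OF u] rev_in_perms[OF M]] by blast
  obtain i where i: "i \<in> ascents M" "rev M ! j = M ! Suc i" "rev M ! Suc j = M ! i"
    using descents_rev[OF j(1)] .
  have "(M ! Suc i, M ! i) \<in> invs (rev M)"
    using i(2,3) j(1) nth_in_invs[of j "Suc j" "rev M"] unfolding descents_def by auto
  then have "(M ! Suc i, M ! i) \<in> invs u"
    using j(2) i invs_rev[OF u] invs_rev[OF M] by auto
  then show ?thesis using i(1) by blast
qed

section \<open>Congruence classes and their covers\<close>

lemma lattice_congruence_equiv: "lattice_congruence n R \<Longrightarrow> equiv (perms n) R"
  unfolding lattice_congruence_def by blast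

lemma lattice_congruence_join:
  "lattice_congruence n R \<Longrightarrow> (x, x') \<in> R \<Longrightarrow> (y, y') \<in> R \<Longrightarrow> is_join n x y z \<Longrightarrow> is_join n x' y' z'
    \<Longrightarrow> (z, z') \<in> R"
  unfolding lattice_congruence_def by blast

lemma lattice_congruence_meet:
  "lattice_congruence n R \<Longrightarrow> (x, x') \<in> R \<Longrightarrow> (y, y') \<in> R \<Longrightarrow> is_meet n x y z \<Longrightarrow> is_meet n x' y' z'
    \<Longrightarrow> (z, z') \<in> R"
  unfolding lattice_congruence_def by blast

lemma congruence_class_closed_meet:
  assumes R: "lattice_congruence n R" and X: "X \<in> perms n // R"
    and x: "x \<in> X" and y: "y \<in> X" and z: "is_meet n x y z"
  shows "z \<in> X"
proof -
  have E: "equiv (perms n) R" using lattice_congruence_equiv[OF R] .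
  have xp: "x \<in> perms n" using x in_quotient_imp_subset[OF E X] by blast
  have "(x, x) \<in> R" "(x, y) \<in> R" using quotient_eq_iff[OF E X X] x y by blast+
  moreover have "is_meet n x x x" using xp unfolding is_meet_def weak_le_def by blast
  ultimately have "(x, z) \<in> R" using lattice_congruence_meet[OF R] z by blast
  then show ?thesis using in_quotient_imp_closed[OF E X x] by blast
qed

lemma congruence_class_closed_join:
  assumes R: "lattice_congruence n R" and X: "X \<in> perms n // R"
    and x: "x \<in> X" and y: "y \<in> X" and z: "is_join n x y z"
  shows "z \<in> X"
proof -
  have E: "equiv (perms n) R" using lattice_congruence_equiv[OF R] .
  have xp: "x \<in> perms n" using x in_quotient_imp_subset[OF E X] by blast
  have "(x, x) \<in> R" "(x, y) \<in> R" using quotient_eq_iff[OF E X X] x y by blast+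
  moreover have "is_join n x x x" using xp unfolding is_join_def weak_le_def by blast
  ultimately have "(x, z) \<in> R" using lattice_congruence_join[OF R] z by blast
  then show ?thesis using in_quotient_imp_closed[OF E X x] by blast
qed

lemma finite_nonempty_class:
  assumes R: "lattice_congruence n R" and X: "X \<in> perms n // R"
  shows "finite (invs ` X)" "invs ` X \<noteq> {}"
proof -
  have E: "equiv (perms n) R" using lattice_congruence_equiv[OF R] .
  show "finite (invs ` X)"
    using finite_subset[OF in_quotient_imp_subset[OF E X] finite_perms] by blast
  show "invs ` X \<noteq> {}" using X E by (auto elim!: quotientE dest: equiv_class_self)
qed

lemma congruence_class_bottom:
  assumes R: "lattice_congruence n R" and X: "X \<in> perms n // R"
  obtains m where "m \<in> X" "\<And>x. x \<in> X \<Longrightarrow> weak_le m x"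
proof -
  have Xp: "X \<subseteq> perms n" using in_quotient_imp_subset[OF lattice_congruence_equiv[OF R] X] .
  obtain m where m: "m \<in> X" and min: "\<And>y. y \<in> X \<Longrightarrow> invs y \<subseteq> invs m \<Longrightarrow> invs y = invs m"
    using finite_has_minimal[OF finite_nonempty_class[OF R X]] by (metis imageE image_eqI)
  have "weak_le m x" if x: "x \<in> X" for x
  proof -
    obtain z where z: "is_meet n m x z" using meet_exists Xp m x by blast
    have "z \<in> X" using congruence_class_closed_meet[OF R X m x z] .
    moreover have "invs z \<subseteq> invs m" using z unfolding is_meet_def weak_le_def by blast
    ultimately have "z = m" using min inj_on_invs[of n] Xp m by (metis inj_onD subsetD)
    then show ?thesis using z unfolding is_meet_def by blast
  qed
  then show ?thesis using m that by blast
qed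

lemma congruence_class_top:
  assumes R: "lattice_congruence n R" and X: "X \<in> perms n // R"
  obtains M where "M \<in> X" "\<And>x. x \<in> X \<Longrightarrow> weak_le x M"
proof -
  have Xp: "X \<subseteq> perms n" using in_quotient_imp_subset[OF lattice_congruence_equiv[OF R] X] .
  obtain M where M: "M \<in> X" and max: "\<And>y. y \<in> X \<Longrightarrow> invs M \<subseteq> invs y \<Longrightarrow> invs M = invs y"
    using finite_has_maximal[OF finite_nonempty_class[OF R X]] by (metis imageE image_eqI)
  have "weak_le x M" if x: "x \<in> X" for x
  proof -
    obtain z where z: "is_join n M x z" using join_exists Xp M x by blast
    have "z \<in> X" using congruence_class_closed_join[OF R X M x z] .
    moreover have "invs M \<subseteq> invs z" using z unfolding is_join_def weak_le_def by blast
    ultimately have "z = M" using max inj_on_invs[of n] Xp M by (metis inj_onD subsetD)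
    then show ?thesis using z unfolding is_join_def by blast
  qed
  then show ?thesis using M that by blast
qed

text \<open>If \<open>y \<in> Y\<close> lies below some element of \<open>X\<close>, then \<open>y\<close> and the meet of \<open>y\<close> with the bottom of \<open>X\<close>
  are congruent.\<close>
lemma lower_cover_meets_bottom:
  assumes R: "lattice_congruence n R" and X: "X \<in> perms n // R" and Y: "Y \<in> perms n // R"
    and m: "m \<in> X" "\<And>x. x \<in> X \<Longrightarrow> weak_le m x" and YX: "qless Y X"
  obtains u where "u \<in> Y" "weak_less u m"
proof -
  have E: "equiv (perms n) R" using lattice_congruence_equiv[OF R] .
  obtain y x where y: "y \<in> Y" and x: "x \<in> X" and yx: "weak_less y x" and "Y \<noteq> X"
    using YX unfolding qless_def by blast
  have yp: "y \<in> perms n" and mp: "m \<in> perms n" and xp: "x \<in> perms n"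
    using y x m(1) in_quotient_imp_subset[OF E X] in_quotient_imp_subset[OF E Y] by auto
  obtain u where u: "is_meet n y m u" using meet_exists[OF yp mp] by blast
  have "is_meet n y x y" using yx yp xp unfolding weak_less_def weak_le_def is_meet_def by auto
  moreover have "(y, y) \<in> R" "(x, m) \<in> R"
    using quotient_eq_iff[OF E Y Y] quotient_eq_iff[OF E X X] y x m by blast+
  ultimately have "(y, u) \<in> R" using lattice_congruence_meet[OF R] u by blast
  then have "u \<in> Y" using in_quotient_imp_closed[OF E Y y] by blast
  moreover have "u \<noteq> m" using \<open>u \<in> Y\<close> m(1) \<open>Y \<noteq> X\<close> quotient_disj[OF E Y X] by blast
  ultimately show ?thesis using that u unfolding is_meet_def weak_less_def by blast
qed

lemma upper_cover_joins_top:
  assumes R: "lattice_congruence n R" and X: "X \<in> perms n // R" and Y: "Y \<in> perms n // R"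
    and M: "M \<in> X" "\<And>x. x \<in> X \<Longrightarrow> weak_le x M" and XY: "qless X Y"
  obtains u where "u \<in> Y" "weak_less M u"
proof -
  have E: "equiv (perms n) R" using lattice_congruence_equiv[OF R] .
  obtain x y where x: "x \<in> X" and y: "y \<in> Y" and xy: "weak_less x y" and "X \<noteq> Y"
    using XY unfolding qless_def by blast
  have yp: "y \<in> perms n" and Mp: "M \<in> perms n" and xp: "x \<in> perms n"
    using y x M(1) in_quotient_imp_subset[OF E X] in_quotient_imp_subset[OF E Y] by auto
  obtain u where u: "is_join n M y u" using join_exists[OF Mp yp] by blast
  have "is_join n x y y" using xy yp xp unfolding weak_less_def weak_le_def is_join_def by auto
  moreover have "(y, y) \<in> R" "(x, M) \<in> R"
    using quotient_eq_iff[OF E Y Y] quotient_eq_iff[OF E X X] y x M by blast+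
  ultimately have "(y, u) \<in> R" using lattice_congruence_join[OF R] u by blast
  then have "u \<in> Y" using in_quotient_imp_closed[OF E Y y] by blast
  moreover have "u \<noteq> M" using \<open>u \<in> Y\<close> M(1) \<open>X \<noteq> Y\<close> quotient_disj[OF E X Y] by blast
  ultimately show ?thesis using that u unfolding is_join_def weak_less_def by blast
qed

text \<open>Some descent of \<open>m\<close> is not an inversion of an element \<open>u\<close> of \<open>Y\<close> below \<open>m\<close>;
  undoing it gives \<open>c\<close> with \<open>u \<le> c < m\<close>, and as \<open>Y\<close> is covered by \<open>X\<close> the class of \<open>c\<close> must be \<open>Y\<close>.\<close>
lemma lower_cover_from_descent:
  assumes R: "lattice_congruence n R" and X: "X \<in> perms n // R"
    and m: "m \<in> X" "\<And>x. x \<in> X \<Longrightarrow> weak_le m x" and cov: "qcovers n R Y X"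
  shows "\<exists>i\<in>descents m. Y = R `` {perm_of n (invs m - {(m ! i, m ! Suc i)})}"
proof -
  have E: "equiv (perms n) R" using lattice_congruence_equiv[OF R] .
  have Y: "Y \<in> perms n // R" and YX: "qless Y X"
    and no_between: "\<not> (\<exists>Z\<in>perms n // R. qless Y Z \<and> qless Z X)"
    using cov unfolding qcovers_def by auto
  obtain u where uY: "u \<in> Y" and um: "weak_less u m" using lower_cover_meets_bottom[OF R X Y m YX] .
  have up: "u \<in> perms n" and mp: "m \<in> perms n"
    using uY m(1) in_quotient_imp_subset[OF E X] in_quotient_imp_subset[OF E Y] by auto
  obtain i where i: "i \<in> descents m" "(m ! i, m ! Suc i) \<notin> invs u"
    using weak_less_imp_descent[OF up mp um] by blast
  let ?c = "perm_of n (invs m - {(m ! i, m ! Suc i)})"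
  have c: "?c \<in> perms n" "invs ?c = invs m - {(m ! i, m ! Suc i)}"
    using perm_of[OF inversion_set_remove_descent[OF mp i(1)]] by auto
  have "(m ! i, m ! Suc i) \<in> invs m"
    using i(1) nth_in_invs[of i "Suc i" m] unfolding descents_def by auto
  then have uc: "weak_le u ?c" and cm: "weak_less ?c m"
    using um i(2) c unfolding weak_less_def weak_le_def by auto
  let ?C = "R `` {?c}"
  have C: "?c \<in> ?C" "?C \<in> perms n // R" using equiv_class_self[OF E c(1)] quotientI[OF c(1)] by auto
  have "\<not> qless Y ?C \<or> \<not> qless ?C X" using no_between C(2) by blast
  moreover have "?C \<noteq> X" using m(2) cm weak_le_antisym[OF c(1) mp] quotient_disj[OF E C(2) X] C(1)
    unfolding weak_less_def by blast
  moreover have "u \<noteq> ?c" if "Y \<noteq> ?C" using that uY C quotient_disj[OF E Y] by blast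
  ultimately have "Y = ?C" using uY C(1) uc cm m(1) unfolding qless_def weak_less_def by blast
  then show ?thesis using i(1) by blast
qed

lemma upper_cover_from_ascent:
  assumes R: "lattice_congruence n R" and X: "X \<in> perms n // R"
    and M: "M \<in> X" "\<And>x. x \<in> X \<Longrightarrow> weak_le x M" and cov: "qcovers n R X Y"
  shows "\<exists>i\<in>ascents M. Y = R `` {perm_of n (invs M \<union> {(M ! Suc i, M ! i)})}"
proof -
  have E: "equiv (perms n) R" using lattice_congruence_equiv[OF R] .
  have Y: "Y \<in> perms n // R" and XY: "qless X Y"
    and no_between: "\<not> (\<exists>Z\<in>perms n // R. qless X Z \<and> qless Z Y)"
    using cov unfolding qcovers_def by auto
  obtain u where uY: "u \<in> Y" and Mu: "weak_less M u" using upper_cover_joins_top[OF R X Y M XY] .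
  have up: "u \<in> perms n" and Mp: "M \<in> perms n"
    using uY M(1) in_quotient_imp_subset[OF E X] in_quotient_imp_subset[OF E Y] by auto
  obtain i where i: "i \<in> ascents M" "(M ! Suc i, M ! i) \<in> invs u"
    using weak_less_imp_ascent[OF up Mp Mu] by blast
  let ?c = "perm_of n (invs M \<union> {(M ! Suc i, M ! i)})"
  have c: "?c \<in> perms n" "invs ?c = invs M \<union> {(M ! Suc i, M ! i)}"
    using perm_of[OF inversion_set_add_ascent[OF Mp i(1)]] by auto
  have "(M ! Suc i, M ! i) \<notin> invs M"
    using i(1) nth_notin_invs[of M i "Suc i"] permsD[OF Mp] unfolding ascents_def by auto
  then have cu: "weak_le ?c u" and Mc: "weak_less M ?c"
    using Mu i(2) c unfolding weak_less_def weak_le_def by auto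
  let ?C = "R `` {?c}"
  have C: "?c \<in> ?C" "?C \<in> perms n // R" using equiv_class_self[OF E c(1)] quotientI[OF c(1)] by auto
  have "\<not> qless X ?C \<or> \<not> qless ?C Y" using no_between C(2) by blast
  moreover have "?C \<noteq> X" using M(2) Mc weak_le_antisym[OF Mp c(1)] quotient_disj[OF E C(2) X] C(1)
    unfolding weak_less_def by blast
  moreover have "u \<noteq> ?c" if "Y \<noteq> ?C" using that uY C quotient_disj[OF E Y] by blast
  ultimately have "Y = ?C" using uY C(1) cu Mc M(1) unfolding qless_def weak_less_def by blast
  then show ?thesis using i(1) by blast
qed

lemma qdegree_le_descents_ascents:
  assumes R: "lattice_congruence n R" and X: "X \<in> perms n // R"
  obtains m M where "m \<in> X" "M \<in> X" "weak_le m M"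
    "qdegree n R X \<le> card (descents m) + card (ascents M)"
proof -
  obtain m where m: "m \<in> X" "\<And>x. x \<in> X \<Longrightarrow> weak_le m x" using congruence_class_bottom[OF R X] by blast
  obtain M where M: "M \<in> X" "\<And>x. x \<in> X \<Longrightarrow> weak_le x M" using congruence_class_top[OF R X] by blast
  let ?lower = "\<lambda>i. R `` {perm_of n (invs m - {(m ! i, m ! Suc i)})}"
  let ?upper = "\<lambda>i. R `` {perm_of n (invs M \<union> {(M ! Suc i, M ! i)})}"
  have "{Y \<in> perms n // R. qcovers n R X Y \<or> qcovers n R Y X}
      \<subseteq> ?lower ` descents m \<union> ?upper ` ascents M"
    using lower_cover_from_descent[OF R X m] upper_cover_from_ascent[OF R X M] by blast
  then have "qdegree n R X \<le> card (?lower ` descents m \<union> ?upper ` ascents M)"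
    unfolding qdegree_def using finite_descents finite_ascents by (intro card_mono) auto
  also have "\<dots> \<le> card (descents m) + card (ascents M)"
    using card_Un_le card_image_le[OF finite_descents] card_image_le[OF finite_ascents]
    by (meson add_le_mono le_trans)
  finally show ?thesis using that m M by blast
qed

section \<open>The upper bound\<close>

definition position :: "'a list \<Rightarrow> 'a \<Rightarrow> nat" where
  "position xs v = (THE i. i < length xs \<and> xs ! i = v)"

lemma position_nth: "distinct xs \<Longrightarrow> i < length xs \<Longrightarrow> position xs (xs ! i) = i"
  unfolding position_def by (rule the_equality) (auto simp: nth_eq_iff_index_eq)

lemma position: "distinct xs \<Longrightarrow> v \<in> set xs \<Longrightarrow> position xs v < length xs \<and> xs ! position xs v = v"
  by (metis in_set_conv_nth position_nth)

lemma precedes_position: "distinct xs \<Longrightarrow> precedes xs a b \<Longrightarrow> position xs a < position xs b"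
  unfolding precedes_def using position_nth by (metis order.strict_trans)

lemma transp_chain:
  assumes r: "transp r" and "i < j" and step: "\<And>k. i \<le> k \<Longrightarrow> k < j \<Longrightarrow> r (f k) (f (Suc k))"
  shows "r (f i) (f j)"
proof -
  obtain d where j: "j = Suc (i + d)" using \<open>i < j\<close> less_iff_Suc_add by auto
  have "r (f i) (f (Suc (i + e)))" if "e \<le> d" for e
    using that
  proof (induction e)
    case 0
    then show ?case using step[of i] j by simp
  next
    case (Suc e)
    then have "r (f i) (f (Suc (i + e)))" "r (f (Suc (i + e))) (f (Suc (Suc (i + e))))"
      using step[of "Suc (i + e)"] j by simp_all
    then show ?case using r by (auto dest: transpD)
  qed
  then show ?thesis using j by simp
qed

lemma no_index_between:
  fixes S :: "nat set"
  assumes "finite S" "i \<le> j" "card {k\<in>S. k < i} = card {k\<in>S. k < j}" "i \<le> k" "k < j"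
  shows "k \<notin> S"
proof
  assume "k \<in> S"
  have "{k\<in>S. k < i} \<subseteq> {k\<in>S. k < j}" using assms(2) by auto
  moreover have "finite {k\<in>S. k < j}" using assms(1) by simp
  ultimately have "{k\<in>S. k < i} = {k\<in>S. k < j}" using assms(3) card_subset_eq by blast
  then show False using \<open>k \<in> S\<close> assms(4,5) by (metis (mono_tags, lifting) leD mem_Collect_eq)
qed

text \<open>An Erd\H{o}s--Szekeres type bound. Label each value \<open>v\<close> by the number of ascents of \<open>p\<close>
  and the number of descents of \<open>q\<close> before \<open>v\<close>. Two values with equal labels lie in one
  decreasing run of \<open>p\<close>, so they form an inversion of \<open>p\<close> and hence of \<open>q\<close>; but they also lie
  in one increasing run of \<open>q\<close>. So the labelling is injective.\<close>
lemma card_le_ascents_descents: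
  assumes p: "p \<in> perms n" and q: "q \<in> perms n" and pq: "weak_le p q"
  shows "n \<le> (card (ascents p) + 1) * (card (descents q) + 1)"
proof -
  have dp: "distinct p" "set p = {1..n}" "length p = n"
    and dq: "distinct q" "set q = {1..n}" "length q = n"
    using permsD p q by auto
  define label where
    "label v = (card {k\<in>ascents p. k < position p v}, card {k\<in>descents q. k < position q v})" for v
  have same_label: False
    if uv: "u \<in> {1..n}" "v \<in> {1..n}" "position p u < position p v" "label u = label v" for u v
  proof -
    let ?i = "position p u" and ?j = "position p v"
    have pu: "?i < n" "p ! ?i = u" "?j < n" "p ! ?j = v"
      using position[OF dp(1), of u] position[OF dp(1), of v] dp uv by auto
    have "\<not> k \<in> ascents p" if "?i \<le> k" "k < ?j" for k
      using no_index_between[OF finite_ascents _ _ that] uv unfolding label_def by auto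
    then have "p ! Suc k < p ! k" if "?i \<le> k" "k < ?j" for k
      using that pu dp nth_eq_iff_index_eq[of p k "Suc k"] unfolding ascents_def by fastforce
    then have "v < u" using transp_chain[of "(>)" ?i ?j "(!) p"] uv(3) pu by auto
    moreover have "precedes p u v" using precedes_nth[OF uv(3)] pu dp by metis
    ultimately have "precedes q u v" using pq unfolding weak_le_def invs_eq_precedes by auto
    then have ij: "position q u < position q v" using precedes_position[OF dq(1)] by blast
    have qu: "position q u < n" "q ! position q u = u" "position q v < n" "q ! position q v = v"
      using position[OF dq(1), of u] position[OF dq(1), of v] dq uv by auto
    have "\<not> k \<in> descents q" if "position q u \<le> k" "k < position q v" for k
      using no_index_between[OF finite_descents _ _ that] uv ij unfolding label_def by auto
    then have "q ! k < q ! Suc k" if "position q u \<le> k" "k < position q v" for k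
      using that qu dq nth_eq_iff_index_eq[of q k "Suc k"] unfolding descents_def by fastforce
    then have "u < v"
      using transp_chain[of "(<)" "position q u" "position q v" "(!) q"] ij qu by auto
    then show False using \<open>v < u\<close> by simp
  qed
  have "inj_on label {1..n}"
  proof (rule inj_onI, rule ccontr)
    fix u v assume uv: "u \<in> {1..n}" "v \<in> {1..n}" "label u = label v" "u \<noteq> v"
    then have "position p u \<noteq> position p v" using position[OF dp(1)] dp(2) by metis
    then show False using same_label[of u v] same_label[of v u] uv by (metis linorder_neqE_nat)
  qed
  moreover have "label ` {1..n} \<subseteq> {0..card (ascents p)} \<times> {0..card (descents q)}"
    unfolding label_def using finite_ascents finite_descents by (auto intro!: card_mono)
  ultimately have "card {1..n} \<le> card ({0..card (ascents p)} \<times> {0..card (descents q)})"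
    by (intro card_inj_on_le) auto
  then show ?thesis by (simp add: card_cartesian_product)
qed

lemma card_descents_add_ascents:
  assumes p: "p \<in> perms n" and n: "n \<ge> 1"
  shows "card (descents p) + card (ascents p) = n - 1"
proof -
  have dp: "distinct p" "length p = n" using permsD p by auto
  have "p ! i \<noteq> p ! Suc i" if "Suc i < n" for i using dp that nth_eq_iff_index_eq by fastforce
  then have "descents p \<union> ascents p = {..<n - 1}"
    unfolding descents_def ascents_def
      using dp n by (auto simp: less_diff_conv) (metis linorder_neqE_nat)
  moreover have "descents p \<inter> ascents p = {}" unfolding descents_def ascents_def by auto
  ultimately show ?thesis
    using card_Un_disjoint[OF finite_descents finite_ascents] by (metis card_lessThan)
qed

lemma ceiling_two_sqrt_le:
  assumes "n \<le> a * b"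
  shows "\<lceil>2 * sqrt (real n)\<rceil> \<le> int a + int b"
proof -
  have "4 * real n \<le> (real a + real b)\<^sup>2"
  proof -
    have "(real a + real b)\<^sup>2 = (real a - real b)\<^sup>2 + 4 * (real a * real b)"
      by (simp add: power2_eq_square algebra_simps)
    moreover have "real n \<le> real a * real b" using assms by (metis of_nat_le_iff of_nat_mult)
    ultimately show ?thesis using zero_le_power2[of "real a - real b"] by linarith
  qed
  then have "sqrt (4 * real n) \<le> real a + real b" by (intro real_le_lsqrt) auto
  then show ?thesis by (simp add: real_sqrt_mult ceiling_le_iff)
qed

theorem qdegree_upper_bound:
  assumes n: "n \<ge> 1" and R: "lattice_congruence n R" and X: "X \<in> perms n // R"
  shows "int (qdegree n R X) \<le> 2 * int n - \<lceil>2 * sqrt (real n)\<rceil>"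
proof -
  obtain m M where mM: "m \<in> X" "M \<in> X" "weak_le m M"
    "qdegree n R X \<le> card (descents m) + card (ascents M)"
    using qdegree_le_descents_ascents[OF R X] by blast
  have p: "m \<in> perms n" "M \<in> perms n"
    using mM in_quotient_imp_subset[OF lattice_congruence_equiv[OF R] X] by auto
  have "\<lceil>2 * sqrt (real n)\<rceil> \<le> int (card (ascents m) + 1) + int (card (descents M) + 1)"
    using ceiling_two_sqrt_le[OF card_le_ascents_descents[OF p mM(3)]] .
  moreover have "card (descents m) + card (ascents m) = n - 1"
    "card (descents M) + card (ascents M) = n - 1"
    using card_descents_add_ascents p n by auto
  ultimately show ?thesis using mM(4) n by linarith
qed

section \<open>A congruence attaining the bound\<close>

definition short_pairs :: "nat \<Rightarrow> (nat \<times> nat) set" where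
  "short_pairs s = {(a, c). c < a \<and> a \<le> c + s}"

definition short_invs :: "nat \<Rightarrow> nat list \<Rightarrow> (nat \<times> nat) set" where
  "short_invs s x = invs x \<inter> short_pairs s"

definition short_cong :: "nat \<Rightarrow> nat \<Rightarrow> (nat list \<times> nat list) set" where
  "short_cong n s = {(x, y). x \<in> perms n \<and> y \<in> perms n \<and> short_invs s x = short_invs s y}"

text \<open>A chain of decreasing steps from \<open>a\<close> down to \<open>c\<close> with \<open>a \<le> c + s\<close> consists of short steps
  only, so short pairs of a transitive closure come from the short pairs of the relation.\<close>
lemma trancl_Int_short_pairs:
  assumes dec: "U \<subseteq> {(a, c). c < a}"
  shows "U\<^sup>+ \<inter> short_pairs s = (U \<inter> short_pairs s)\<^sup>+ \<inter> short_pairs s"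
proof
  show "(U \<inter> short_pairs s)\<^sup>+ \<inter> short_pairs s \<subseteq> U\<^sup>+ \<inter> short_pairs s" using trancl_mono by blast
  show "U\<^sup>+ \<inter> short_pairs s \<subseteq> (U \<inter> short_pairs s)\<^sup>+ \<inter> short_pairs s"
  proof (rule subrelI)
    fix a c assume "(a, c) \<in> U\<^sup>+ \<inter> short_pairs s"
    then have ac: "(a, c) \<in> U\<^sup>+" "(a, c) \<in> short_pairs s" "a \<le> c + s"
      unfolding short_pairs_def by auto
    from ac(1,3) have "(a, c) \<in> (U \<inter> short_pairs s)\<^sup>+"
    proof (induction rule: trancl_induct)
      case (base c)
      then show ?case using dec unfolding short_pairs_def by auto
    next
      case (step b c)
      have "c < b" "b < a" using step.hyps dec trancl_decreasing[OF dec] by auto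
      then have "(a, b) \<in> (U \<inter> short_pairs s)\<^sup>+" "(b, c) \<in> U \<inter> short_pairs s"
        using step unfolding short_pairs_def by auto
      then show ?case by (rule trancl_into_trancl)
    qed
    then show "(a, c) \<in> (U \<inter> short_pairs s)\<^sup>+ \<inter> short_pairs s" using ac(2) by blast
  qed
qed

lemma short_invs_join:
  assumes "x \<in> perms n" "y \<in> perms n" "is_join n x y z"
  shows "short_invs s z = (short_invs s x \<union> short_invs s y)\<^sup>+ \<inter> short_pairs s"
proof -
  have "short_invs s z = (invs x \<union> invs y)\<^sup>+ \<inter> short_pairs s"
    using assms is_join_iff_invs unfolding short_invs_def by simp
  also have "\<dots> = ((invs x \<union> invs y) \<inter> short_pairs s)\<^sup>+ \<inter> short_pairs s"
    by (rule trancl_Int_short_pairs) (auto simp: invs_eq_precedes)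
  finally show ?thesis unfolding short_invs_def by (simp add: Int_Un_distrib2)
qed

lemma short_invs_meet:
  assumes "x \<in> perms n" "y \<in> perms n" "is_meet n x y z"
  shows "short_invs s z = (full_invs n \<inter> short_pairs s) -
    ((full_invs n \<inter> short_pairs s - short_invs s x) \<union>
     (full_invs n \<inter> short_pairs s - short_invs s y))\<^sup>+"
proof -
  let ?W = "(full_invs n - invs x) \<union> (full_invs n - invs y)"
  have "short_invs s z = (full_invs n \<inter> short_pairs s) - (?W\<^sup>+ \<inter> short_pairs s)"
    using assms is_meet_iff_invs unfolding short_invs_def by auto
  also have "?W\<^sup>+ \<inter> short_pairs s = (?W \<inter> short_pairs s)\<^sup>+ \<inter> short_pairs s"
    by (rule trancl_Int_short_pairs) (auto simp: full_invs_def)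
  also have "?W \<inter> short_pairs s
      = (full_invs n \<inter> short_pairs s - short_invs s x) \<union>
        (full_invs n \<inter> short_pairs s - short_invs s y)"
    unfolding short_invs_def by blast
  finally show ?thesis by blast
qed

lemma lattice_congruence_short_cong: "lattice_congruence n (short_cong n s)"
  unfolding lattice_congruence_def
proof (intro conjI allI impI)
  show "equiv (perms n) (short_cong n s)"
    unfolding equiv_def refl_on_def sym_def trans_def short_cong_def by auto
next
  fix x x' y y' z z'
  assume "(x, x') \<in> short_cong n s \<and> (y, y') \<in> short_cong n s \<and>
    is_join n x y z \<and> is_join n x' y' z'"
  then show "(z, z') \<in> short_cong n s"
    using short_invs_join[of x n y z s] short_invs_join[of x' n y' z' s]
    unfolding short_cong_def is_join_def by auto
next
  fix x x' y y' z z'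
  assume "(x, x') \<in> short_cong n s \<and> (y, y') \<in> short_cong n s \<and>
    is_meet n x y z \<and> is_meet n x' y' z'"
  then show "(z, z') \<in> short_cong n s"
    using short_invs_meet[of x n y z s] short_invs_meet[of x' n y' z' s]
    unfolding short_cong_def is_meet_def by auto
qed

lemma short_cong_class:
  "x \<in> perms n \<Longrightarrow> short_cong n s `` {x} = {w \<in> perms n. short_invs s w = short_invs s x}"
  unfolding short_cong_def by auto

lemma short_cong_class_eq_iff:
  "x \<in> perms n \<Longrightarrow> y \<in> perms n \<Longrightarrow>
    short_cong n s `` {x} = short_cong n s `` {y} \<longleftrightarrow> short_invs s x = short_invs s y"
  unfolding short_cong_class by blast

text \<open>Classes are determined by their short inversions, which grow along the weak order.\<close>
lemma short_cong_covers:
  assumes x: "x \<in> perms n" and y: "y \<in> perms n" and yx: "weak_less y x"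
    and e: "short_invs s x = insert e (short_invs s y)" "e \<notin> short_invs s y"
  shows "qcovers n (short_cong n s) (short_cong n s `` {y}) (short_cong n s `` {x})"
proof -
  let ?R = "short_cong n s"
  have mono: "short_invs s a \<subseteq> short_invs s b" if "weak_less a b" for a b
    using that unfolding weak_less_def weak_le_def short_invs_def by auto
  have "x \<in> ?R `` {x}" "y \<in> ?R `` {y}" using x y short_cong_class by auto
  moreover have "?R `` {y} \<noteq> ?R `` {x}" using short_cong_class_eq_iff[OF x y] e by auto
  ultimately have yx': "qless (?R `` {y}) (?R `` {x})" unfolding qless_def using yx by blast
  have "\<not> (qless (?R `` {y}) Z \<and> qless Z (?R `` {x}))" if Z: "Z \<in> perms n // ?R" for Z
  proof
    assume h: "qless (?R `` {y}) Z \<and> qless Z (?R `` {x})"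
    obtain z where z: "z \<in> perms n" "Z = ?R `` {z}" using Z by (auto elim: quotientE)
    have in_class: "short_invs s w = short_invs s v" if "v \<in> perms n" "w \<in> ?R `` {v}" for v w
      using that short_cong_class by blast
    obtain y1 z1 where "y1 \<in> ?R `` {y}" "z1 \<in> Z" "weak_less y1 z1"
      using h unfolding qless_def by blast
    then have yz: "short_invs s y \<subseteq> short_invs s z" using mono in_class y z by metis
    obtain z2 x2 where "z2 \<in> Z" "x2 \<in> ?R `` {x}" "weak_less z2 x2"
      using h unfolding qless_def by blast
    then have zx: "short_invs s z \<subseteq> short_invs s x" using mono in_class x z by metis
    have "short_invs s z = short_invs s y \<or> short_invs s z = short_invs s x"
      using yz zx e(1) by (cases "e \<in> short_invs s z") auto
    then have "Z = ?R `` {y} \<or> Z = ?R `` {x}"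
      unfolding z(2)
        using short_cong_class_eq_iff[OF z(1) x] short_cong_class_eq_iff[OF z(1) y] by simp
    then show False using h unfolding qless_def by blast
  qed
  then show ?thesis unfolding qcovers_def using yx' x y by (auto intro: quotientI)
qed

lemma div_eq_iff_mod_less:
  fixes x y s :: nat
  assumes "x < y" "y \<le> x + s"
  shows "y div s = x div s \<longleftrightarrow> x mod s < y mod s"
proof
  have decomp: "x = x div s * s + x mod s" "y = y div s * s + y mod s" by simp_all
  show "x mod s < y mod s" if "y div s = x div s"
    using that decomp assms(1) by (metis add_less_cancel_left)
  show "y div s = x div s" if "x mod s < y mod s"
  proof (rule ccontr)
    assume "y div s \<noteq> x div s"
    moreover have "x div s \<le> y div s" using assms(1) by (simp add: div_le_mono)
    ultimately have "Suc (x div s) \<le> y div s" by simp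
    then have "Suc (x div s) * s \<le> y div s * s" by (rule mult_right_mono) simp
    then have "x div s * s + s \<le> y div s * s" by simp
    then show False using decomp assms that by linarith
  qed
qed

lemma mod_neq_if_less_add:
  fixes x y s :: nat
  assumes "x < y" "y < x + s"
  shows "x mod s \<noteq> y mod s"
proof
  assume "x mod s = y mod s"
  then have "s dvd y - x" using mod_eq_dvd_iff_nat[of x y s] assms(1) by simp
  moreover have "0 < y - x" "y - x < s" using assms by auto
  ultimately show False using dvd_imp_le[of s "y - x"] by simp
qed

text \<open>Cut \<open>1, \<dots>, n\<close> into blocks of \<open>s\<close> consecutive values. \<open>block_invs\<close> is the inversion set of the
  permutation listing the blocks in increasing order, each block decreasingly; \<open>residue_invs\<close> that
  of the permutation listing the residue classes mod \<open>s\<close> from the largest residue down, each class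
  increasingly. The two agree on short pairs, so both permutations lie in one class.\<close>
definition block_invs :: "nat \<Rightarrow> nat \<Rightarrow> (nat \<times> nat) set" where
  "block_invs n s = {(a, c) \<in> full_invs n. (a - 1) div s = (c - 1) div s}"

definition residue_invs :: "nat \<Rightarrow> nat \<Rightarrow> (nat \<times> nat) set" where
  "residue_invs n s = {(a, c) \<in> full_invs n. (c - 1) mod s < (a - 1) mod s}"

lemma block_invs_Int_short_pairs:
  "block_invs n s \<inter> short_pairs s = residue_invs n s \<inter> short_pairs s"
proof -
  have "(a - 1) div s = (c - 1) div s \<longleftrightarrow> (c - 1) mod s < (a - 1) mod s"
    if "1 \<le> c" "c < a" "a \<le> c + s" for a c
    using div_eq_iff_mod_less[of "c - 1" "a - 1" s] that by auto
  then show ?thesis unfolding block_invs_def residue_invs_def short_pairs_def full_invs_def by auto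
qed

lemma block_div_between:
  fixes a b c s :: nat
  assumes "c < b" "b < a" "(a - 1) div s = (c - 1) div s"
  shows "(a - 1) div s = (b - 1) div s" "(b - 1) div s = (c - 1) div s"
proof -
  have "(c - 1) div s \<le> (b - 1) div s" "(b - 1) div s \<le> (a - 1) div s"
    using assms(1,2) by (simp_all add: div_le_mono)
  then show "(a - 1) div s = (b - 1) div s" "(b - 1) div s = (c - 1) div s"
    using assms(3) by simp_all
qed

text \<open>A pair inside a block splits into two pairs inside the same block, and a pair of adjacent
  values is not a composite of two pairs.\<close>
lemma inversion_set_block_invs_remove: "inversion_set n (block_invs n s - {(Suc v, v)})"
  unfolding inversion_set_def
proof (intro conjI)
  let ?e = "(Suc v, v)"
  show "block_invs n s - {?e} \<subseteq> full_invs n" unfolding block_invs_def by auto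
  show "trans (block_invs n s - {?e})"
    unfolding trans_def block_invs_def full_invs_def by auto
  show "cotrans (block_invs n s - {?e})"
    unfolding cotrans_def
  proof (intro allI impI)
    fix a b c assume "(a, c) \<in> block_invs n s - {?e}" "c < b" "b < a"
    then have "(a, b) \<in> block_invs n s" "(b, c) \<in> block_invs n s" "(a, b) \<noteq> (b, c)"
      using block_div_between[of c b a s] unfolding block_invs_def full_invs_def by auto
    then show "(a, b) \<in> block_invs n s - {?e} \<or> (b, c) \<in> block_invs n s - {?e}" by auto
  qed
qed

lemma inversion_set_block_invs: "inversion_set n (block_invs n s)"
  using inversion_set_block_invs_remove[of n s 0] unfolding block_invs_def full_invs_def by simp

lemma inversion_set_residue_invs: "inversion_set n (residue_invs n s)"
  unfolding inversion_set_def
proof (intro conjI)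
  show "residue_invs n s \<subseteq> full_invs n" unfolding residue_invs_def by auto
  show "trans (residue_invs n s)" unfolding trans_def residue_invs_def full_invs_def by auto
  show "cotrans (residue_invs n s)" unfolding cotrans_def residue_invs_def full_invs_def by auto
qed

lemma pred_add_mod_self: "1 \<le> c \<Longrightarrow> (c + s - 1) mod s = (c - 1) mod (s::nat)"
  by (cases c) simp_all

text \<open>Adding the pair \<open>(c + s, c)\<close>, whose entries have equal residues, to \<open>residue_invs\<close> is harmless
  because every value strictly between them has a different residue.\<close>
lemma inversion_set_residue_invs_add:
  assumes s: "0 < s" and c: "1 \<le> c" "c + s \<le> n"
  shows "inversion_set n (insert (c + s, c) (residue_invs n s))"
  unfolding inversion_set_def
proof (intro conjI)
  let ?T = "insert (c + s, c) (residue_invs n s)"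
  have res: "(c + s - 1) mod s = (c - 1) mod s" using pred_add_mod_self c(1) .
  have tr: "trans (residue_invs n s)" "cotrans (residue_invs n s)"
    using inversion_set_residue_invs unfolding inversion_set_def by auto
  show "?T \<subseteq> full_invs n" using s c unfolding residue_invs_def full_invs_def by auto
  show "trans ?T"
  proof (rule transI)
    fix x y z assume xy: "(x, y) \<in> ?T" and yz: "(y, z) \<in> ?T"
    consider "(x, y) \<in> residue_invs n s" "(y, z) \<in> residue_invs n s"
      | "(x, y) = (c + s, c)" "(y, z) \<in> residue_invs n s"
      | "(x, y) \<in> residue_invs n s" "(y, z) = (c + s, c)"
      | "(x, y) = (c + s, c)" "(y, z) = (c + s, c)"
      using xy yz by blast
    then show "(x, z) \<in> ?T"
    proof cases
      case 1
      then show ?thesis using tr(1) by (blast dest: transD)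
    next
      case 2
      then show ?thesis using res c unfolding residue_invs_def full_invs_def by auto
    next
      case 3
      then show ?thesis using res c unfolding residue_invs_def full_invs_def by auto
    qed (use s in auto)
  qed
  show "cotrans ?T"
    unfolding cotrans_def
  proof (intro allI impI)
    fix x y z assume xz: "(x, z) \<in> ?T" "z < y" "y < x"
    show "(x, y) \<in> ?T \<or> (y, z) \<in> ?T"
    proof (cases "(x, z) = (c + s, c)")
      case True
      then have "(c - 1) mod s \<noteq> (y - 1) mod s"
        using mod_neq_if_less_add[of "c - 1" "y - 1" s] xz c by auto
      then show ?thesis using True xz c res unfolding residue_invs_def full_invs_def by auto
    next
      case False
      then show ?thesis using tr(2) xz unfolding cotrans_def by blast
    qed
  qed
qed

lemma card_adjacent_in_blocks:
  assumes s: "0 < s" and r: "1 \<le> r" and nrs: "n \<le> r * s"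
  shows "n \<le> card {v. 1 \<le> v \<and> v < n \<and> v div s = (v - 1) div s} + r"
proof -
  let ?V = "{v. 1 \<le> v \<and> v < n \<and> v div s = (v - 1) div s}"
  have "{1..<n} \<subseteq> ?V \<union> (\<lambda>k. s * k) ` {1..<r}"
  proof
    fix v assume v: "v \<in> {1..<n}"
    show "v \<in> ?V \<union> (\<lambda>k. s * k) ` {1..<r}"
    proof (cases "s dvd v")
      case True
      then obtain k where k: "v = s * k" by blast
      have "k < r"
      proof (rule ccontr)
        assume "\<not> k < r"
        then have "r * s \<le> k * s" by simp
        moreover have "v = k * s" "v < n" using k v by auto
        ultimately show False using nrs by linarith
      qed
      moreover have "1 \<le> k" using k v by (cases k) auto
      ultimately show ?thesis using k by auto
    next
      case False
      then have "v div s = (v - 1) div s" using v by (cases v) (auto simp: div_Suc dvd_eq_mod_eq_0)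
      then show ?thesis using v by auto
    qed
  qed
  moreover have "finite ?V" by (rule finite_subset[of _ "{..n}"]) auto
  ultimately have "card {1..<n} \<le> card (?V \<union> (\<lambda>k. s * k) ` {1..<r})" by (intro card_mono) auto
  also have "\<dots> \<le> card ?V + card ((\<lambda>k. s * k) ` {1..<r})" by (rule card_Un_le)
  also have "\<dots> \<le> card ?V + (r - 1)" using card_image_le[of "{1..<r}" "\<lambda>k. s * k"] by simp
  finally show ?thesis using r by simp
qed

lemma qdegree_short_cong_ge:
  fixes n s :: nat
  assumes s: "0 < s"
  defines "X \<equiv> short_cong n s `` {perm_of n (block_invs n s)}"
  shows "X \<in> perms n // short_cong n s"
    and "card {v. 1 \<le> v \<and> v < n \<and> v div s = (v - 1) div s} + (n - s) \<le> qdegree n (short_cong n s) X"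
proof -
  let ?R = "short_cong n s" and ?B = "block_invs n s \<inter> short_pairs s"
  define Vd where "Vd = {v. 1 \<le> v \<and> v < n \<and> v div s = (v - 1) div s}"
  define Vu where "Vu = {c. 1 \<le> c \<and> c + s \<le> n}"
  define p where "p = perm_of n (block_invs n s)"
  define q where "q = perm_of n (residue_invs n s)"
  have p: "p \<in> perms n" "invs p = block_invs n s"
    using perm_of[OF inversion_set_block_invs] p_def by auto
  have q: "q \<in> perms n" "invs q = residue_invs n s"
    using perm_of[OF inversion_set_residue_invs] q_def by auto
  have short_p: "short_invs s p = ?B" and short_q: "short_invs s q = ?B"
    using p q block_invs_Int_short_pairs unfolding short_invs_def by auto
  show X: "X \<in> perms n // ?R" using p unfolding X_def p_def by (auto intro: quotientI)
  have Xq: "X = ?R `` {q}"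
    using short_cong_class_eq_iff[OF p(1) q(1)] short_p short_q unfolding X_def p_def by simp
  define lower where "lower v = perm_of n (block_invs n s - {(Suc v, v)})" for v
  define upper where "upper c = perm_of n (insert (c + s, c) (residue_invs n s))" for c
  have lower: "lower v \<in> perms n" "invs (lower v) = block_invs n s - {(Suc v, v)}"
    "short_invs s (lower v) = ?B - {(Suc v, v)}" "(Suc v, v) \<in> ?B" if "v \<in> Vd" for v
  proof -
    show "lower v \<in> perms n" "invs (lower v) = block_invs n s - {(Suc v, v)}"
      using perm_of[OF inversion_set_block_invs_remove] lower_def by auto
    then show "short_invs s (lower v) = ?B - {(Suc v, v)}" unfolding short_invs_def by auto
    show "(Suc v, v) \<in> ?B"
      using that s unfolding Vd_def block_invs_def full_invs_def short_pairs_def by auto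
  qed
  have upper: "upper c \<in> perms n" "invs (upper c) = insert (c + s, c) (residue_invs n s)"
    "short_invs s (upper c) = insert (c + s, c) ?B" "(c + s, c) \<notin> ?B" if "c \<in> Vu" for c
  proof -
    show "upper c \<in> perms n" "invs (upper c) = insert (c + s, c) (residue_invs n s)"
      using perm_of[OF inversion_set_residue_invs_add[OF s]] that unfolding Vu_def upper_def by auto
    have "(c + s - 1) mod s = (c - 1) mod s" using that pred_add_mod_self unfolding Vu_def by blast
    then have "(c + s, c) \<notin> residue_invs n s" unfolding residue_invs_def by auto
    then show "(c + s, c) \<notin> ?B" using block_invs_Int_short_pairs by blast
    show "short_invs s (upper c) = insert (c + s, c) ?B"
      using \<open>invs (upper c) = _\<close> s block_invs_Int_short_pairs
        unfolding short_invs_def short_pairs_def by auto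
  qed
  let ?lower_class = "\<lambda>v. ?R `` {lower v}" and ?upper_class = "\<lambda>c. ?R `` {upper c}"
  have "qcovers n ?R (?lower_class v) X" if v: "v \<in> Vd" for v
  proof -
    have "short_invs s p = insert (Suc v, v) (short_invs s (lower v))"
      "(Suc v, v) \<notin> short_invs s (lower v)"
      using lower(3,4)[OF v] short_p by auto
    moreover have "weak_less (lower v) p"
      using lower(2,3,4)[OF v] p(2) short_p unfolding weak_less_def weak_le_def by auto
    ultimately show ?thesis
      using short_cong_covers[OF p(1) lower(1)[OF v]] unfolding X_def p_def by blast
  qed
  moreover have "qcovers n ?R X (?upper_class c)" if c: "c \<in> Vu" for c
  proof -
    have "short_invs s (upper c) = insert (c + s, c) (short_invs s q)" "(c + s, c) \<notin> short_invs s q"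
      using upper(3,4)[OF c] short_q by simp_all
    moreover have "weak_less q (upper c)"
      using upper(2,3,4)[OF c] q(2) short_q unfolding weak_less_def weak_le_def by auto
    ultimately show ?thesis using short_cong_covers[OF upper(1)[OF c] q(1)] unfolding Xq by blast
  qed
  ultimately have sub: "?lower_class ` Vd \<union> ?upper_class ` Vu
      \<subseteq> {Y \<in> perms n // ?R. qcovers n ?R X Y \<or> qcovers n ?R Y X}"
    by (auto simp: qcovers_def)
  have "inj_on ?lower_class Vd"
  proof (rule inj_onI)
    fix v v' assume "v \<in> Vd" "v' \<in> Vd" "?lower_class v = ?lower_class v'"
    then have "?B - {(Suc v, v)} = ?B - {(Suc v', v')}" "(Suc v, v) \<in> ?B" "(Suc v', v') \<in> ?B"
      using lower short_cong_class_eq_iff[OF lower(1) lower(1)] by metis+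
    then show "v = v'" by blast
  qed
  moreover have "inj_on ?upper_class Vu"
  proof (rule inj_onI)
    fix c c' assume "c \<in> Vu" "c' \<in> Vu" "?upper_class c = ?upper_class c'"
    then have "insert (c + s, c) ?B = insert (c' + s, c') ?B" "(c + s, c) \<notin> ?B" "(c' + s, c') \<notin> ?B"
      using upper short_cong_class_eq_iff[OF upper(1) upper(1)] by metis+
    then show "c = c'" by blast
  qed
  moreover have "?lower_class v \<noteq> ?upper_class c" if "v \<in> Vd" "c \<in> Vu" for v c
  proof -
    have "?B - {(Suc v, v)} \<noteq> insert (c + s, c) ?B" using lower(4)[OF that(1)] by blast
    then show ?thesis
      using lower(1,3)[OF that(1)] upper(1,3)[OF that(2)] short_cong_class_eq_iff by metis
  qed
  then have "?lower_class ` Vd \<inter> ?upper_class ` Vu = {}" by blast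
  moreover have "finite Vd" "finite Vu"
    unfolding Vd_def Vu_def by (rule finite_subset[of _ "{..n}"], auto)+
  ultimately have "card Vd + card Vu = card (?lower_class ` Vd \<union> ?upper_class ` Vu)"
    by (simp add: card_Un_disjoint card_image)
  also have "\<dots> \<le> qdegree n ?R X"
  proof -
    have "finite (perms n // ?R)"
      by (rule finite_quotient[OF finite_perms]) (auto simp: short_cong_def)
    then show ?thesis unfolding qdegree_def using sub by (intro card_mono) auto
  qed
  finally have "card Vd + card Vu \<le> qdegree n ?R X" .
  moreover have "Vu = {1..n - s}" unfolding Vu_def by auto
  ultimately show "card {v. 1 \<le> v \<and> v < n \<and> v div s = (v - 1) div s} + (n - s) \<le> qdegree n ?R X"
    unfolding Vd_def by simp
qed

text \<open>Take \<open>r = \<lceil>t / 2\<rceil>\<close> and \<open>s = \<lfloor>t / 2\<rfloor>\<close> for \<open>t = \<lceil>2 \<surd>n\<rceil>\<close>: then \<open>4 r s \<ge> t\<^sup>2 - 1 \<ge> 4 n - 1\<close>.\<close>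
lemma ceiling_two_sqrt_eq_add:
  assumes n: "1 \<le> n"
  obtains r s where "1 \<le> r" "0 < s" "n \<le> r * s" "int r + int s = \<lceil>2 * sqrt (real n)\<rceil>"
proof -
  define t where "t = \<lceil>2 * sqrt (real n)\<rceil>"
  define k where "k = t div 2"
  have t: "2 * sqrt (real n) \<le> of_int t" "1 \<le> sqrt (real n)" using n unfolding t_def by simp_all
  then have "2 \<le> t" by linarith
  then have k: "1 \<le> k" "t = 2 * k + t mod 2" "t mod 2 = 0 \<or> t mod 2 = 1" unfolding k_def by auto
  have "(2 * sqrt (real n))\<^sup>2 \<le> (of_int t)\<^sup>2" using t by (intro power_mono) auto
  then have "real_of_int (4 * int n) \<le> real_of_int (t\<^sup>2)" by (simp add: power_mult_distrib)
  then have "4 * int n \<le> t\<^sup>2" by linarith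
  also have "t\<^sup>2 = 4 * ((k + t mod 2) * k) + t mod 2"
    using k(2,3) by (auto simp: power2_eq_square algebra_simps)
  finally have "4 * int n \<le> 4 * ((k + t mod 2) * k) + 1" using pos_mod_bound[of 2 t] by linarith
  moreover have "4 * a \<le> 4 * b + 1 \<Longrightarrow> a \<le> b" for a b :: int by presburger
  ultimately have "int n \<le> (k + t mod 2) * k" by blast
  moreover have "int (nat (k + t mod 2) * nat k) = (k + t mod 2) * k" using k(1) by simp
  ultimately have "n \<le> nat (k + t mod 2) * nat k" by linarith
  moreover have "int (nat (k + t mod 2)) + int (nat k) = t" using k by auto
  ultimately show ?thesis using that[of "nat (k + t mod 2)" "nat k"] k(1) unfolding t_def by auto
qed

lemma exists_congruence_qdegree_eq:
  assumes n: "n \<ge> 1"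
  shows "\<exists>R. lattice_congruence n R \<and>
    (\<exists>X \<in> perms n // R. int (qdegree n R X) = 2 * int n - \<lceil>2 * sqrt (real n)\<rceil>)"
proof -
  obtain r s where rs: "1 \<le> r" "0 < s" "n \<le> r * s" "int r + int s = \<lceil>2 * sqrt (real n)\<rceil>"
    using ceiling_two_sqrt_eq_add[OF n] by blast
  let ?R = "short_cong n s" and ?X = "short_cong n s `` {perm_of n (block_invs n s)}"
  let ?Vd = "{v. 1 \<le> v \<and> v < n \<and> v div s = (v - 1) div s}"
  have X: "?X \<in> perms n // ?R" using qdegree_short_cong_ge(1)[OF rs(2)] .
  have "card ?Vd + (n - s) \<le> qdegree n ?R ?X" using qdegree_short_cong_ge(2)[OF rs(2)] .
  moreover have "n \<le> card ?Vd + r" using card_adjacent_in_blocks[OF rs(2,1,3)] .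
  moreover have "int n - int s \<le> int (n - s)" by simp
  moreover have "int (qdegree n ?R ?X) \<le> 2 * int n - \<lceil>2 * sqrt (real n)\<rceil>"
    using qdegree_upper_bound[OF n lattice_congruence_short_cong X] .
  ultimately have "int (qdegree n ?R ?X) = 2 * int n - \<lceil>2 * sqrt (real n)\<rceil>"
    using rs(4) by linarith
  then show ?thesis using lattice_congruence_short_cong X by blast
qed

theorem mainTheorem15:
  shows "(\<forall>n::nat. \<forall>R. n \<ge> 1 \<and> lattice_congruence n R \<longrightarrow>
            (\<forall>X \<in> perms n // R.
               int (qdegree n R X) \<le> 2 * int n - \<lceil>2 * sqrt (real n)\<rceil>))
       \<and> (\<forall>n::nat. n \<ge> 1 \<longrightarrow>
            (\<exists>R. lattice_congruence n R \<and>
               (\<exists>X \<in> perms n // R.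
                  int (qdegree n R X) = 2 * int n - \<lceil>2 * sqrt (real n)\<rceil>)))"
  using qdegree_upper_bound exists_congruence_qdegree_eq by blast

end
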